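(* Let $l,m,k$ be non-negative integers with $2l\le m\le 2k$. Then $$S(k,m,l)=\sum_{d=0}^{k+l-m}\left[\binom{m}{l}-\binom{m}{l-d-1}\right]\left[\binom{2k-m+1}{k-m+l-d}-\binom{2k-m+1}{k-m+l-d-1}\right].$$
   Context: A Dyck path of semilength $k$ (Dyck $k$-path) is a lattice path in $\mathbb{Z}^2$ starting at $(0,0)$, ending at $(2k,0)$, never going below the $x$-axis, each of whose $2k$ steps is either a rise $(1,1)$ or a fall $(1,-1)$. For a Dyck $k$-path $D$ and non-negative integers $l\le m\le 2k$, $S(D,m,l)$ denotes the number of intervals of length $m$ in $D$ (i.e. blocks of $m$ consecutive steps of $D$, one for each starting position $s\in\{1,\dots,2k-m+1\}$) that contain exactly $l$ falls; and $S(k,m,l)=\sum_{D} S(D,m,l)$, the sum over all Dyck $k$-paths $D$. Convention: $\binom{x}{y}=0$ for integers $x\ge 0$ and $y<0$, and $\binom{x}{y}=0$ if $y>x\ge 0$. *)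

theory Defs
  imports Main
begin

text \<open>A path is a list of steps: True = rise (1,1), False = fall (1,-1).\<close>

definition rises :: "bool list \<Rightarrow> nat" where
  "rises xs = length (filter (\<lambda>b. b) xs)"

definition falls :: "bool list \<Rightarrow> nat" where
  "falls xs = length (filter (\<lambda>b. \<not> b) xs)"

definition dyck_path :: "nat \<Rightarrow> bool list \<Rightarrow> bool" where
  "dyck_path k D \<longleftrightarrow> length D = 2 * k
     \<and> (\<forall>i \<le> length D. falls (take i D) \<le> rises (take i D))
     \<and> rises D = falls D"

text \<open>S(D,m,l): number of intervals of m consecutive steps of D (starting positions
  s = 1..|D|-m+1, here 0-indexed) containing exactly l falls.\<close>
definition S_path :: "bool list \<Rightarrow> nat \<Rightarrow> nat \<Rightarrow> nat" where
  "S_path D m l = card {s. s + m \<le> length D \<and> falls (take m (drop s D)) = l}"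

definition S :: "nat \<Rightarrow> nat \<Rightarrow> nat \<Rightarrow> nat" where
  "S k m l = (\<Sum>D \<in> {D. dyck_path k D}. S_path D m l)"

definition bz :: "nat \<Rightarrow> int \<Rightarrow> int" where
  "bz x y = (if y < 0 then 0 else int (x choose nat y))"

end

theory Submission
  imports Defs
begin

text \<open>
  Cut a Dyck path \<open>D\<close> at a window as \<open>D = A @ B @ C\<close>, where \<open>B\<close> is the window, and let
  \<open>h\<close> be the height of \<open>A\<close>. Then \<open>B\<close> is a path with \<open>m\<close> steps and \<open>l\<close> falls that stays
  nonnegative when started at height \<open>h\<close>, and \<open>P = A @ rise # C\<^sup>*\<close>, where \<open>C\<^sup>*\<close> is \<open>C\<close>
  reversed with rises and falls exchanged, is a nonnegative path with \<open>2k - m + 1\<close> steps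
  ending at height \<open>2h + m - 2l + 1\<close>. Conversely \<open>A\<close> is recovered from \<open>P\<close> as the prefix
  before the last rise out of height \<open>h\<close>. Hence \<open>S(k,m,l)\<close> is a sum over \<open>h\<close> of products
  of two ballot numbers, and by the reflection principle the number of paths with \<open>m\<close>
  steps and \<open>l\<close> falls that stay nonnegative from height \<open>h\<close> is
  \<open>binom m l - binom m (l - h - 1)\<close>; the summation index \<open>d\<close> is \<open>h\<close>.
\<close>

fun height :: "bool list \<Rightarrow> int" where
  "height [] = 0"
| "height (b # xs) = (if b then 1 else -1) + height xs"

fun nonneg_from :: "int \<Rightarrow> bool list \<Rightarrow> bool" where
  "nonneg_from h [] \<longleftrightarrow> 0 \<le> h"
| "nonneg_from h (b # xs) \<longleftrightarrow> 0 \<le> h \<and> nonneg_from (if b then h + 1 else h - 1) xs"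

lemma height_append [simp]: "height (xs @ ys) = height xs + height ys"
  by (induction xs) auto

lemma height_eq_length_minus_falls: "height xs = int (length xs) - 2 * int (falls xs)"
  by (induction xs) (auto simp: falls_def)

lemma height_eq_rises_minus_falls: "height xs = int (rises xs) - int (falls xs)"
  by (induction xs) (auto simp: falls_def rises_def)

lemma nonneg_from_start: "nonneg_from h xs \<Longrightarrow> 0 \<le> h"
  by (cases xs) auto

lemma nonneg_from_end: "nonneg_from h xs \<Longrightarrow> 0 \<le> h + height xs"
  by (induction xs arbitrary: h) (auto split: if_splits, fastforce+)

lemma nonneg_from_append:
  "nonneg_from h (xs @ ys) \<longleftrightarrow> nonneg_from h xs \<and> nonneg_from (h + height xs) ys"
  by (induction xs arbitrary: h) (auto simp: algebra_simps dest: nonneg_from_start)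

lemma nonneg_from_mono: "nonneg_from a xs \<Longrightarrow> a \<le> b \<Longrightarrow> nonneg_from b xs"
  by (induction xs arbitrary: a b) (auto split: if_splits)

lemma nonneg_from_iff_prefixes:
  "nonneg_from h xs \<longleftrightarrow> (\<forall>i \<le> length xs. 0 \<le> h + height (take i xs))"
proof (induction xs arbitrary: h)
  case (Cons b xs)
  have "(\<forall>i \<le> length (b # xs). 0 \<le> h + height (take i (b # xs))) \<longleftrightarrow>
        0 \<le> h \<and> (\<forall>i \<le> length xs. 0 \<le> (if b then h + 1 else h - 1) + height (take i xs))"
    (is "?prefixes \<longleftrightarrow> _")
  proof
    assume ?prefixes
    then show "0 \<le> h \<and> (\<forall>i \<le> length xs. 0 \<le> (if b then h + 1 else h - 1) + height (take i xs))"
      by (auto simp: algebra_simps dest: spec[of _ 0] spec[of _ "Suc _"])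
  next
    assume "0 \<le> h \<and> (\<forall>i \<le> length xs. 0 \<le> (if b then h + 1 else h - 1) + height (take i xs))"
    then show ?prefixes
      by (auto simp: algebra_simps take_Cons' split: if_splits)
  qed
  with Cons.IH show ?case by simp
qed simp

lemma dyck_path_iff_nonneg_from:
  "dyck_path k D \<longleftrightarrow> length D = 2 * k \<and> nonneg_from 0 D \<and> height D = 0"
  unfolding dyck_path_def nonneg_from_iff_prefixes height_eq_rises_minus_falls by auto

definition flip_rev :: "bool list \<Rightarrow> bool list" where
  "flip_rev xs = rev (map Not xs)"

lemma length_flip_rev [simp]: "length (flip_rev xs) = length xs"
  by (simp add: flip_rev_def)

lemma height_flip_rev [simp]: "height (flip_rev xs) = - height xs"
  by (induction xs) (auto simp: flip_rev_def)

lemma flip_rev_flip_rev [simp]: "flip_rev (flip_rev xs) = xs"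
  by (simp add: flip_rev_def rev_map comp_def)

lemma nonneg_from_flip_rev: "nonneg_from b (flip_rev xs) \<longleftrightarrow> nonneg_from (b - height xs) xs"
proof (induction xs arbitrary: b)
  case (Cons x xs)
  have "flip_rev (x # xs) = flip_rev xs @ [\<not> x]"
    by (simp add: flip_rev_def)
  with Cons show ?case
    using nonneg_from_start[of "b - height xs" xs]
    by (auto simp: nonneg_from_append algebra_simps)
qed (simp add: flip_rev_def)

subsection \<open>Ballot numbers by reflection\<close>

definition ballot_paths :: "nat \<Rightarrow> nat \<Rightarrow> int \<Rightarrow> bool list set" where
  "ballot_paths m l h = {B. length B = m \<and> falls B = l \<and> nonneg_from h B}"

lemma finite_ballot_paths: "finite (ballot_paths m l h)"
  by (rule finite_subset[OF _ finite_list_length[of m]]) (auto simp: ballot_paths_def)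

lemma Cons_in_ballot_paths_iff:
  assumes "0 \<le> h"
  shows "b # B \<in> ballot_paths (Suc m) l h \<longleftrightarrow>
    (if b then B \<in> ballot_paths m l (h + 1)
     else 0 < l \<and> 0 < h \<and> B \<in> ballot_paths m (l - 1) (h - 1))"
  using assms by (auto simp: ballot_paths_def falls_def dest: nonneg_from_start)

lemma ballot_paths_Suc:
  assumes "0 \<le> h"
  shows "ballot_paths (Suc m) l h =
    Cons True ` ballot_paths m l (h + 1) \<union>
    (if l = 0 \<or> h = 0 then {} else Cons False ` ballot_paths m (l - 1) (h - 1))"
proof (rule set_eqI)
  fix B
  show "B \<in> ballot_paths (Suc m) l h \<longleftrightarrow>
    B \<in> Cons True ` ballot_paths m l (h + 1) \<union>
      (if l = 0 \<or> h = 0 then {} else Cons False ` ballot_paths m (l - 1) (h - 1))"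
  proof (cases B)
    case (Cons b B')
    then show ?thesis
      using assms by (cases b) (auto simp: Cons_in_ballot_paths_iff[OF assms])
  qed (auto simp: ballot_paths_def)
qed

lemma bz_Suc: "bz (Suc m) y = bz m y + bz m (y - 1)"
proof (cases "0 < y")
  case True
  then have "nat y = Suc (nat (y - 1))" by simp
  with True show ?thesis by (simp add: bz_def)
qed (auto simp: bz_def)

lemma bz_neg [simp]: "y < 0 \<Longrightarrow> bz m y = 0"
  by (simp add: bz_def)

lemma card_ballot_paths:
  assumes "0 \<le> h" and "2 * int l \<le> int m + h + 1"
  shows "int (card (ballot_paths m l h)) = bz m (int l) - bz m (int l - h - 1)"
  using assms
proof (induction m arbitrary: l h)
  case 0
  have "ballot_paths 0 l h = (if l = 0 then {[]} else {})"
    using \<open>0 \<le> h\<close> by (auto simp: ballot_paths_def falls_def)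
  with 0 show ?case by (simp add: bz_def)
next
  case (Suc m)
  have rise: "int (card (ballot_paths m l (h + 1))) = bz m (int l) - bz m (int l - h - 2)"
    using Suc.IH[of "h + 1" l] Suc.prems by (simp add: algebra_simps)
  have "int (card (ballot_paths (Suc m) l h)) =
        int (card (ballot_paths m l (h + 1))) +
        (if l = 0 \<or> h = 0 then 0 else int (card (ballot_paths m (l - 1) (h - 1))))"
    unfolding ballot_paths_Suc[OF \<open>0 \<le> h\<close>]
    by (subst card_Un_disjoint) (auto simp: finite_ballot_paths card_image)
  also have "\<dots> = bz (Suc m) (int l) - bz (Suc m) (int l - h - 1)"
  proof (cases "l = 0 \<or> h = 0")
    case True
    with rise Suc.prems show ?thesis by (auto simp: bz_Suc)
  next
    case False
    then have "int (card (ballot_paths m (l - 1) (h - 1))) = bz m (int l - 1) - bz m (int l - h - 1)"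
      using Suc.IH[of "h - 1" "l - 1"] Suc.prems by (simp add: of_nat_diff)
    with False rise show ?thesis by (simp add: bz_Suc algebra_simps)
  qed
  finally show ?case .
qed

subsection \<open>Decomposition at the last rise out of a given height\<close>

lemma last_ascent_exists:
  assumes "0 \<le> h" and "h < height P"
  shows "\<exists>A E. P = A @ True # E \<and> height A = h \<and> nonneg_from 0 E"
  using assms
proof (induction P rule: rev_induct)
  case (snoc x Q)
  show ?case
  proof (cases "h < height Q")
    case True
    with snoc obtain A E where AE: "Q = A @ True # E" "height A = h" "nonneg_from 0 E"
      by blast
    with snoc.prems have "nonneg_from 0 (E @ [x])"
      using nonneg_from_end[OF AE(3)] by (auto simp: nonneg_from_append)
    with AE show ?thesis by auto
  next
    case False
    with snoc.prems have "x \<and> height Q = h"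
      by (auto split: if_splits)
    then show ?thesis by force
  qed
qed simp

lemma height_zero_before_ascent:
  assumes "us @ True # E = True # E'" and "height us = 0" and "nonneg_from 0 E'"
  shows "us = []"
proof (rule ccontr)
  assume "us \<noteq> []"
  with assms(1) obtain us' where us: "us = True # us'" and "E' = us' @ True # E"
    by (cases us) auto
  with assms(3) have "0 \<le> height us'"
    using nonneg_from_end[of 0 us'] by (simp add: nonneg_from_append)
  with us assms(2) show False by simp
qed

lemma last_ascent_unique:
  assumes "A @ True # E = A' @ True # E'" and "height A = height A'"
    and "nonneg_from 0 E" and "nonneg_from 0 E'"
  shows "A = A' \<and> E = E'"
proof -
  obtain us where "A = A' @ us \<and> us @ True # E = True # E' \<or> A @ us = A' \<and> True # E = us @ True # E'"
    using append_eq_append_conv2[of A "True # E" A' "True # E'"] assms(1) by blast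
  then show ?thesis
  proof
    assume "A = A' @ us \<and> us @ True # E = True # E'"
    with assms have "us = []"
      using height_zero_before_ascent[of us E E'] by simp
    with assms(1) \<open>A = A' @ us \<and> _\<close> show ?thesis by simp
  next
    assume "A @ us = A' \<and> True # E = us @ True # E'"
    with assms have "us = []"
      using height_zero_before_ascent[of us E' E] by (metis add_cancel_left_right height_append)
    with assms(1) \<open>A @ us = A' \<and> _\<close> show ?thesis by simp
  qed
qed

subsection \<open>Windows of Dyck paths and their encoding\<close>

definition windows :: "nat \<Rightarrow> nat \<Rightarrow> nat \<Rightarrow> (bool list \<times> nat) set" where
  "windows k m l = {(D, s). dyck_path k D \<and> s + m \<le> length D \<and> falls (take m (drop s D)) = l}"

lemma S_eq_card_windows: "S k m l = card (windows k m l)"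
proof -
  have "windows k m l =
      (SIGMA D:{D. dyck_path k D}. {s. s + m \<le> length D \<and> falls (take m (drop s D)) = l})"
    by (auto simp: windows_def)
  moreover have "finite {D. dyck_path k D}"
    by (rule finite_subset[OF _ finite_list_length[of "2 * k"]]) (auto simp: dyck_path_def)
  moreover have "finite {s. s + m \<le> length D \<and> falls (take m (drop s D)) = l}" for D :: "bool list"
    by (rule finite_subset[of _ "{..length D}"]) auto
  ultimately show ?thesis
    by (simp add: S_def S_path_def card_SigmaI)
qed

lemma windows_split:
  assumes "(D, s) \<in> windows k m l"
  obtains A B C where "D = A @ B @ C" and "s = length A" and "length B = m"
proof
  show "D = take s D @ take m (drop s D) @ drop (s + m) D"
    by (metis append_take_drop_id add.commute drop_drop)
qed (use assms in \<open>auto simp: windows_def\<close>)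

lemma append_window_in_windows_iff:
  assumes "length B = m"
  shows "(A @ B @ C, length A) \<in> windows k m l \<longleftrightarrow>
    length A + m + length C = 2 * k \<and> falls B = l \<and>
    nonneg_from 0 A \<and> nonneg_from (height A) B \<and> nonneg_from (height A + height B) C \<and>
    height A + height B + height C = 0"
  using assms
  by (auto simp: windows_def dyck_path_iff_nonneg_from nonneg_from_append add.assoc)

lemma nonneg_from_flip_rev_window_suffix:
  assumes "length B = m" and "(A @ B @ C, length A) \<in> windows k m l"
  shows "nonneg_from 0 (flip_rev C)"
proof -
  from assms have "nonneg_from (height A + height B) C" and "height A + height B + height C = 0"
    by (simp_all add: append_window_in_windows_iff)
  moreover from this(2) have "- height C = height A + height B"
    by linarith
  ultimately show ?thesis
    by (simp add: nonneg_from_flip_rev)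
qed

definition cut_window :: "nat \<Rightarrow> bool list \<times> nat \<Rightarrow> int \<times> bool list \<times> bool list" where
  "cut_window m = (\<lambda>(D, s).
     (height (take s D), take m (drop s D), take s D @ True # flip_rev (drop (s + m) D)))"

definition window_codes :: "nat \<Rightarrow> nat \<Rightarrow> nat \<Rightarrow> (int \<times> bool list \<times> bool list) set" where
  "window_codes k m l =
     (SIGMA h:{0..int k + int l - int m}.
        ballot_paths m l h \<times> ballot_paths (2 * k - m + 1) (nat (int k + int l - int m - h)) 0)"

lemma cut_window_append:
  "length B = m \<Longrightarrow> cut_window m (A @ B @ C, length A) = (height A, B, A @ True # flip_rev C)"
  by (simp add: cut_window_def)

lemma cut_window_in_window_codes:
  assumes "m \<le> 2 * k" and "x \<in> windows k m l"
  shows "cut_window m x \<in> window_codes k m l"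
proof -
  obtain A B C where x: "x = (A @ B @ C, length A)" and B: "length B = m"
    using windows_split assms(2) by (metis surj_pair)
  define h where "h = height A"
  define P where "P = A @ True # flip_rev C"
  from assms(2) have parts: "length A + m + length C = 2 * k" "falls B = l"
    "nonneg_from 0 A" "nonneg_from h B" "nonneg_from (h + height B) C"
    "h + height B + height C = 0"
    unfolding x append_window_in_windows_iff[OF B] h_def by auto
  have hB: "height B = int m - 2 * int l"
    using B parts(2) by (simp add: height_eq_length_minus_falls)
  have h: "0 \<le> h"
    using nonneg_from_end[OF parts(3)] by (simp add: h_def)
  have "nonneg_from 0 (flip_rev C)"
    using assms(2) unfolding x by (rule nonneg_from_flip_rev_window_suffix[OF B])
  then have "nonneg_from 0 P"
    using parts(3) h by (auto simp: P_def nonneg_from_append h_def intro: nonneg_from_mono)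
  moreover have "length P = 2 * k - m + 1" and "height P = 2 * h + int m - 2 * int l + 1"
    using parts(1,6) hB by (auto simp: P_def h_def)
  moreover from calculation(2,3) have "int (falls P) = int k + int l - int m - h"
    using assms(1) by (simp add: height_eq_length_minus_falls)
  ultimately show ?thesis
    using parts h B by (simp add: x cut_window_append[OF B] window_codes_def ballot_paths_def
        h_def[symmetric] P_def[symmetric])
qed

lemma window_codes_subset_cut_window_image:
  assumes "2 * l \<le> m" and "m \<le> 2 * k"
  shows "window_codes k m l \<subseteq> cut_window m ` windows k m l"
proof
  fix y assume y_code: "y \<in> window_codes k m l"
  obtain h B P where y: "y = (h, B, P)"
    by (cases y)
  from y_code have h: "0 \<le> h" "h \<le> int k + int l - int m"
    and "B \<in> ballot_paths m l h"
    and "P \<in> ballot_paths (2 * k - m + 1) (nat (int k + int l - int m - h)) 0"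
    unfolding y window_codes_def by simp_all
  then have B: "length B = m" "falls B = l" "nonneg_from h B"
    and P: "length P = 2 * k - m + 1" "falls P = nat (int k + int l - int m - h)" "nonneg_from 0 P"
    unfolding ballot_paths_def by simp_all
  have hB: "height B = int m - 2 * int l"
    using B by (simp add: height_eq_length_minus_falls)
  have hP: "height P = 2 * h + int m - 2 * int l + 1"
    using P h assms by (simp add: height_eq_length_minus_falls)
  obtain A E where AE: "P = A @ True # E" "height A = h" "nonneg_from 0 E"
    using last_ascent_exists[of h P] h hP assms by auto
  have hE: "height E = h + height B"
    using AE(1,2) hP hB by simp
  have "nonneg_from 0 A"
    using P(3) by (simp add: AE(1) nonneg_from_append)
  moreover have "length A + m + length (flip_rev E) = 2 * k"
    using P(1) assms(2) by (simp add: AE(1))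
  moreover have "nonneg_from (height A + height B) (flip_rev E)"
    using AE(2,3) hE by (simp add: nonneg_from_flip_rev)
  ultimately have "(A @ B @ flip_rev E, length A) \<in> windows k m l"
    using AE(2) B hE by (simp add: append_window_in_windows_iff)
  moreover have "cut_window m (A @ B @ flip_rev E, length A) = y"
    using AE B y by (simp add: cut_window_append)
  ultimately show "y \<in> cut_window m ` windows k m l"
    by force
qed

lemma inj_on_cut_window: "inj_on (cut_window m) (windows k m l)"
proof (rule inj_onI)
  fix x x' assume x: "x \<in> windows k m l" and x': "x' \<in> windows k m l"
    and eq: "cut_window m x = cut_window m x'"
  obtain A B C where xs: "x = (A @ B @ C, length A)" and B: "length B = m"
    using windows_split x by (metis surj_pair)
  obtain A' B' C' where xs': "x' = (A' @ B' @ C', length A')" and B': "length B' = m"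
    using windows_split x' by (metis surj_pair)
  have "nonneg_from 0 (flip_rev C)"
    using x unfolding xs by (rule nonneg_from_flip_rev_window_suffix[OF B])
  moreover have "nonneg_from 0 (flip_rev C')"
    using x' unfolding xs' by (rule nonneg_from_flip_rev_window_suffix[OF B'])
  moreover have "A @ True # flip_rev C = A' @ True # flip_rev C'" "height A = height A'" "B = B'"
    using eq by (simp_all add: xs xs' cut_window_append B B')
  ultimately have "A = A'" "C = C'" "B = B'"
    using last_ascent_unique by (metis flip_rev_flip_rev)+
  then show "x = x'"
    by (simp add: xs xs')
qed

lemma bij_betw_cut_window:
  assumes "2 * l \<le> m" and "m \<le> 2 * k"
  shows "bij_betw (cut_window m) (windows k m l) (window_codes k m l)"
  unfolding bij_betw_def
  using inj_on_cut_window cut_window_in_window_codes window_codes_subset_cut_window_image assms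
  by blast

theorem theorem1:
  fixes l m k :: nat
  assumes "2 * l \<le> m" and "m \<le> 2 * k"
  shows "int (S k m l) =
    (\<Sum>d \<in> {0 .. int k + int l - int m}.
       (bz m (int l) - bz m (int l - d - 1)) *
       (bz (2 * k - m + 1) (int k - int m + int l - d)
        - bz (2 * k - m + 1) (int k - int m + int l - d - 1)))"
proof -
  let ?K = "int k + int l - int m"
  have "int (S k m l) = int (card (window_codes k m l))"
    using S_eq_card_windows bij_betw_same_card[OF bij_betw_cut_window[OF assms]] by simp
  also have "\<dots> = (\<Sum>d \<in> {0 .. ?K}.
      int (card (ballot_paths m l d)) * int (card (ballot_paths (2 * k - m + 1) (nat (?K - d)) 0)))"
    by (simp add: window_codes_def card_SigmaI finite_ballot_paths card_cartesian_product)
  also have "\<dots> = (\<Sum>d \<in> {0 .. ?K}.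
       (bz m (int l) - bz m (int l - d - 1)) *
       (bz (2 * k - m + 1) (int k - int m + int l - d)
        - bz (2 * k - m + 1) (int k - int m + int l - d - 1)))"
  proof (rule sum.cong[OF refl])
    fix d assume "d \<in> {0 .. ?K}"
    with assms show "int (card (ballot_paths m l d)) *
        int (card (ballot_paths (2 * k - m + 1) (nat (?K - d)) 0)) =
      (bz m (int l) - bz m (int l - d - 1)) *
      (bz (2 * k - m + 1) (int k - int m + int l - d)
        - bz (2 * k - m + 1) (int k - int m + int l - d - 1))"
      by (simp add: card_ballot_paths algebra_simps)
  qed
  finally show ?thesis .
qed

end
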